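(* For each completely regular frame $L$, $\overline{\mathrm{C}}(\mathfrak{B}(L))$ is isomorphic to the Dedekind–MacNeille completion of $\overline{\mathrm{C}}(L)$.
   Context: $\mathbb{Q}$ is the rationals; $a^\ast$ is the pseudocomplement; $\mathfrak{B}(L)=\{a\in L\mid a=a^{\ast\ast}\}$ is the Booleanization of $L$ (a complete Boolean algebra, hence a frame). The frame $\mathfrak{L}(\overline{\mathbb{IR}})$ is presented by generators $(r,\textsf{---})$, $(\textsf{---},s)$ ($r,s\in\mathbb{Q}$) subject to (r1) $(r,\textsf{---})\wedge(\textsf{---},s)=0$ whenever $r\ge s$; (r3) $(r,\textsf{---})=\bigvee_{s>r}(s,\textsf{---})$; (r4) $(\textsf{---},s)=\bigvee_{r<s}(\textsf{---},r)$. For a frame $M$, $\overline{\mathrm{C}}(M)$ is the set of frame homomorphisms $f\colon\mathfrak{L}(\overline{\mathbb{IR}})\to M$ with $f(r,\textsf{---})\vee f(\textsf{---},s)=1$ whenever $r<s$ (extended continuous real functions), ordered by $f\le g$ iff $f(r,\textsf{---})\le g(r,\textsf{---})$ and $g(\textsf{---},s)\le f(\textsf{---},s)$ for all $r,s$. A Dedekind–MacNeille completion of a poset is a join- and meet-dense embedding into a complete lattice. *)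

theory Defs
  imports Main "HOL.Rat"
begin

class frame = complete_lattice +
  assumes frame_distrib: "inf a (Sup S) = (SUP s\<in>S. inf a s)"

definition pc :: "'a::frame \<Rightarrow> 'a" where
  "pc a = Sup {x. inf x a = bot}"

definition rather_below :: "'a::frame \<Rightarrow> 'a \<Rightarrow> bool" where
  "rather_below a b \<longleftrightarrow> sup (pc a) b = top"

definition completely_below :: "'a::frame \<Rightarrow> 'a \<Rightarrow> bool" where
  "completely_below a b \<longleftrightarrow> (\<exists>c :: rat \<Rightarrow> 'a. c 0 = a \<and> c 1 = b \<and>
      (\<forall>p q. 0 \<le> p \<longrightarrow> p < q \<longrightarrow> q \<le> 1 \<longrightarrow> rather_below (c p) (c q)))"

definition completely_regular :: "'a::frame itself \<Rightarrow> bool" where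
  "completely_regular _ \<longleftrightarrow> (\<forall>a::'a. a = Sup {b. completely_below b a})"

text \<open>Booleanization B(L) = {a | a = a**}, as a subset of L carrying the induced order.\<close>
definition booleanization :: "'a::frame set" where
  "booleanization = {a. a = pc (pc a)}"

text \<open>A frame is described by a carrier A with the order inherited from the ambient
  type; its joins and meets are least upper / greatest lower bounds inside A.\<close>

definition is_lub_in :: "'a::order set \<Rightarrow> 'a set \<Rightarrow> 'a \<Rightarrow> bool" where
  "is_lub_in A S x \<longleftrightarrow> x \<in> A \<and> (\<forall>s\<in>S. s \<le> x) \<and> (\<forall>y\<in>A. (\<forall>s\<in>S. s \<le> y) \<longrightarrow> x \<le> y)"

definition is_glb_in :: "'a::order set \<Rightarrow> 'a set \<Rightarrow> 'a \<Rightarrow> bool" where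
  "is_glb_in A S x \<longleftrightarrow> x \<in> A \<and> (\<forall>s\<in>S. x \<le> s) \<and> (\<forall>y\<in>A. (\<forall>s\<in>S. y \<le> s) \<longrightarrow> y \<le> x)"

definition join_in :: "'a::order set \<Rightarrow> 'a set \<Rightarrow> 'a" where
  "join_in A S = (THE x. is_lub_in A S x)"

definition meet_in :: "'a::order set \<Rightarrow> 'a set \<Rightarrow> 'a" where
  "meet_in A S = (THE x. is_glb_in A S x)"

text \<open>A frame homomorphism f from the presented frame L(IR-bar) to the frame (carrier A)
  is, by the universal property of presentations, the same as an assignment of the
  generators respecting the relations (r1), (r3), (r4). We record it as the pair
  (u, l) with u r = f(r,--) and l s = f(--,s). The element lies in C-bar(A) iff
  additionally f(r,--) \<or> f(--,s) = 1 for r < s.\<close>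

definition ext_C :: "'a::order set \<Rightarrow> ((rat \<Rightarrow> 'a) \<times> (rat \<Rightarrow> 'a)) set" where
  "ext_C A = {(u, l).
      (\<forall>r. u r \<in> A) \<and> (\<forall>s. l s \<in> A) \<and>
      (\<forall>r s. s \<le> r \<longrightarrow> meet_in A {u r, l s} = join_in A {}) \<and>
      (\<forall>r. u r = join_in A (u ` {s. r < s})) \<and>
      (\<forall>s. l s = join_in A (l ` {r. r < s})) \<and>
      (\<forall>r s. r < s \<longrightarrow> join_in A {u r, l s} = meet_in A {})}"

definition ext_le :: "(rat \<Rightarrow> 'a::order) \<times> (rat \<Rightarrow> 'a) \<Rightarrow> (rat \<Rightarrow> 'a) \<times> (rat \<Rightarrow> 'a) \<Rightarrow> bool" where
  "ext_le f g \<longleftrightarrow> (\<forall>r. fst f r \<le> fst g r) \<and> (\<forall>s. snd g s \<le> snd f s)"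

definition lub_wrt :: "('b \<Rightarrow> 'b \<Rightarrow> bool) \<Rightarrow> 'b set \<Rightarrow> 'b set \<Rightarrow> 'b \<Rightarrow> bool" where
  "lub_wrt le Q S x \<longleftrightarrow> x \<in> Q \<and> (\<forall>s\<in>S. le s x) \<and> (\<forall>y\<in>Q. (\<forall>s\<in>S. le s y) \<longrightarrow> le x y)"

definition glb_wrt :: "('b \<Rightarrow> 'b \<Rightarrow> bool) \<Rightarrow> 'b set \<Rightarrow> 'b set \<Rightarrow> 'b \<Rightarrow> bool" where
  "glb_wrt le Q S x \<longleftrightarrow> x \<in> Q \<and> (\<forall>s\<in>S. le x s) \<and> (\<forall>y\<in>Q. (\<forall>s\<in>S. le y s) \<longrightarrow> le y x)"

definition is_DM_completion ::
  "('a \<Rightarrow> 'a \<Rightarrow> bool) \<Rightarrow> 'a set \<Rightarrow> ('b \<Rightarrow> 'b \<Rightarrow> bool) \<Rightarrow> 'b set \<Rightarrow> ('a \<Rightarrow> 'b) \<Rightarrow> bool" where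
  "is_DM_completion leP P leQ Q e \<longleftrightarrow>
     (\<forall>x\<in>Q. leQ x x) \<and>
     (\<forall>x\<in>Q. \<forall>y\<in>Q. \<forall>z\<in>Q. leQ x y \<longrightarrow> leQ y z \<longrightarrow> leQ x z) \<and>
     (\<forall>x\<in>Q. \<forall>y\<in>Q. leQ x y \<longrightarrow> leQ y x \<longrightarrow> x = y) \<and>
     (\<forall>S\<subseteq>Q. \<exists>x. lub_wrt leQ Q S x) \<and>
     e ` P \<subseteq> Q \<and>
     (\<forall>x\<in>P. \<forall>y\<in>P. leQ (e x) (e y) \<longleftrightarrow> leP x y) \<and>
     (\<forall>q\<in>Q. lub_wrt leQ Q {e x | x. x \<in> P \<and> leQ (e x) q} q) \<and>
     (\<forall>q\<in>Q. glb_wrt leQ Q {e x | x. x \<in> P \<and> leQ q (e x)} q)"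

end

theory Submission
  imports Defs
begin

(*
  Write a* for the pseudocomplement. In C(L) an extended function f is determined by either
  of its halves: f(--,s) is the join of the f(r,--)* over r < s, and f(r,--) is the join of the
  f(--,s)* over s > r. The second formula only sees f(--,s)* = f(--,s)***, so composing with the
  nucleus a |-> a** from L onto B(L) is an order embedding of C(L) into C(B(L)). The latter is
  a complete lattice: a family has as join the function with upper half (join of the f_i(r,--))**.
  For join-density, complete regularity writes g(s,--) as the join of the a completely below it;
  a scale witnessing this, reparametrised over the rationals below s, is an f in C(L) with
  a <= f(r,--) for r < s and f** <= g. Meet-density follows by applying join-density to -g,
  since f |-> -f is an order-reversing involution commuting with the embedding.
*)

section \<open>Pseudocomplements in frames\<close>

subclass (in frame) distrib_lattice
proof
  fix x y z :: 'a
  have "inf a (sup b c) = sup (inf a b) (inf a c)" for a b c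
    using frame_distrib[of a "{b, c}"] by simp
  then show "sup x (inf y z) = inf (sup x y) (sup x z)" by (rule distrib_imp1)
qed

lemma frame_inf_SUP: "inf (a::'a::frame) (SUP i\<in>I. f i) = (SUP i\<in>I. inf a (f i))"
  using frame_distrib[of a "f ` I"] by (simp add: image_image)

lemma inf_pc: "inf (a::'a::frame) (pc a) = bot"
  unfolding pc_def frame_distrib by (simp add: inf_commute)

lemma le_pc_iff: "(x::'a::frame) \<le> pc a \<longleftrightarrow> inf x a = bot"
proof
  assume "x \<le> pc a"
  then have "inf x a \<le> inf (pc a) a" by (rule inf_mono) simp
  then show "inf x a = bot" using inf_pc[of a] by (simp add: inf_commute bot_unique)
qed (auto simp: pc_def intro: Sup_upper)

lemma pc_antimono: "(a::'a::frame) \<le> b \<Longrightarrow> pc b \<le> pc a"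
  by (metis le_pc_iff inf_pc inf_mono order_refl bot_unique inf_commute)

lemma le_pc_pc: "(a::'a::frame) \<le> pc (pc a)"
  by (simp add: le_pc_iff inf_pc)

lemma pc_pc_pc: "pc (pc (pc (a::'a::frame))) = pc a"
  by (simp add: antisym le_pc_pc pc_antimono)

lemma pc_pc_mono: "(a::'a::frame) \<le> b \<Longrightarrow> pc (pc a) \<le> pc (pc b)"
  by (simp add: pc_antimono)

lemma pc_bot [simp]: "pc (bot::'a::frame) = top"
  by (simp add: pc_def)

lemma pc_top [simp]: "pc (top::'a::frame) = bot"
  using inf_pc[of "top::'a"] by simp

lemma pc_SUP: "pc (SUP i\<in>I. f i) = (INF i\<in>I. pc (f i::'a::frame))"
proof (rule order.antisym)
  show "pc (SUP i\<in>I. f i) \<le> (INF i\<in>I. pc (f i))"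
    by (intro INF_greatest pc_antimono SUP_upper)
  have "inf (INF i\<in>I. pc (f i)) (SUP i\<in>I. f i) = bot"
    unfolding frame_inf_SUP by (auto simp: le_pc_iff[symmetric] intro: INF_lower)
  then show "(INF i\<in>I. pc (f i)) \<le> pc (SUP i\<in>I. f i)" by (simp add: le_pc_iff)
qed

lemma pc_sup: "pc (sup a b) = inf (pc a) (pc (b::'a::frame))"
  using pc_SUP[of id "{a, b}"] by simp

lemma pc_pc_SUP_pc_pc: "pc (pc (SUP i\<in>I. pc (pc (f i)))) = pc (pc (SUP i\<in>I. f i::'a::frame))"
  by (simp add: pc_SUP pc_pc_pc)

lemma inf_pc_pc_eq_bot_iff: "inf x (pc (pc a)) = bot \<longleftrightarrow> inf x (a::'a::frame) = bot"
  by (metis le_pc_iff pc_pc_pc)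

lemma pc_pc_inf: "pc (pc (inf a b)) = inf (pc (pc a)) (pc (pc (b::'a::frame)))"
proof (rule order.antisym)
  show "pc (pc (inf a b)) \<le> inf (pc (pc a)) (pc (pc b))" by (simp add: pc_pc_mono)
  have "inf (inf (pc (inf a b)) a) b = bot"
    using inf_pc[of "inf a b"] by (simp add: inf_aci)
  then have "inf (inf (pc (inf a b)) a) (pc (pc b)) = bot"
    by (simp only: inf_pc_pc_eq_bot_iff)
  then have "inf (inf (pc (inf a b)) (pc (pc b))) a = bot"
    by (simp add: inf_aci)
  then have "inf (inf (pc (inf a b)) (pc (pc b))) (pc (pc a)) = bot"
    by (simp only: inf_pc_pc_eq_bot_iff)
  then show "inf (pc (pc a)) (pc (pc b)) \<le> pc (pc (inf a b))"
    by (simp add: le_pc_iff inf_aci)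
qed

lemma pc_pc_sup_pc: "pc (pc (sup a (pc (a::'a::frame)))) = top"
  by (simp add: pc_sup inf_pc pc_pc_pc inf_commute[of "pc a"])

lemma pc_le_if_sup_eq_top: "sup a b = top \<Longrightarrow> pc a \<le> (b::'a::frame)"
  by (metis inf_pc inf_sup_distrib1 inf_top_right sup_bot_left inf.cobounded2 inf_commute)

lemma pc_le_pc_pc_if_pc_pc_sup_eq_top:
  assumes "pc (pc (sup a b)) = top"
  shows "pc a \<le> pc (pc (b::'a::frame))"
proof -
  have "pc (sup a b) = bot" using pc_pc_pc[of "sup a b"] by (simp add: assms)
  then show ?thesis by (simp add: le_pc_iff pc_sup)
qed

lemma rather_below_le: "rather_below (a::'a::frame) b \<Longrightarrow> a \<le> b"
  unfolding rather_below_def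
  by (metis inf_pc inf_sup_distrib1 inf_top_right sup_bot_left inf.cobounded2)

lemma rather_below_mono:
  "(a::'a::frame) \<le> a' \<Longrightarrow> rather_below a' b' \<Longrightarrow> b' \<le> b \<Longrightarrow> rather_below a b"
  unfolding rather_below_def by (metis pc_antimono sup_mono top_unique)

lemma rather_below_bot: "rather_below (bot::'a::frame) a"
  by (simp add: rather_below_def)

lemma join_in_eq: "is_lub_in A S x \<Longrightarrow> join_in A S = x"
  unfolding join_in_def by (rule the_equality) (auto simp: is_lub_in_def intro: antisym)

lemma meet_in_eq: "is_glb_in A S x \<Longrightarrow> meet_in A S = x"
  unfolding meet_in_def by (rule the_equality) (auto simp: is_glb_in_def intro: antisym)

lemma join_in_UNIV: "join_in (UNIV::'a::complete_lattice set) S = Sup S"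
  by (rule join_in_eq) (simp add: is_lub_in_def Sup_upper Sup_least)

lemma meet_in_UNIV: "meet_in (UNIV::'a::complete_lattice set) S = Inf S"
  by (rule meet_in_eq) (simp add: is_glb_in_def Inf_lower Inf_greatest)

lemma pc_pc_in_booleanization: "pc (pc (a::'a::frame)) \<in> booleanization"
  by (simp add: booleanization_def pc_pc_pc)

lemma pc_pc_booleanization: "(a::'a::frame) \<in> booleanization \<Longrightarrow> pc (pc a) = a"
  by (simp add: booleanization_def)

lemma join_in_booleanization: "join_in (booleanization::'a::frame set) S = pc (pc (Sup S))"
proof (rule join_in_eq)
  have "pc (pc (Sup S)) \<le> y" if "y \<in> booleanization" "\<forall>s\<in>S. s \<le> y" for y
    using that pc_pc_mono[of "Sup S" y] by (simp add: Sup_least pc_pc_booleanization)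
  then show "is_lub_in booleanization S (pc (pc (Sup S)))"
    unfolding is_lub_in_def by (meson Sup_upper le_pc_pc order_trans pc_pc_in_booleanization)
qed

lemma meet_in_booleanization:
  assumes "S \<subseteq> (booleanization::'a::frame set)"
  shows "meet_in booleanization S = Inf S"
proof (rule meet_in_eq)
  have "pc (pc (Inf S)) \<le> x" if "x \<in> S" for x
    using that assms pc_pc_mono[OF Inf_lower[OF that]] by (auto simp: pc_pc_booleanization)
  then have "pc (pc (Inf S)) \<le> Inf S" by (rule Inf_greatest)
  then have "Inf S \<in> booleanization"
    by (simp add: antisym booleanization_def le_pc_pc)
  then show "is_glb_in booleanization S (Inf S)"
    by (simp add: is_glb_in_def Inf_lower Inf_greatest)
qed

lemma SUP_lessThan_lessThan:
  "(SUP t\<in>{..<s}. SUP r\<in>{..<t}. F r) = (SUP r\<in>{..<s::'b::dense_linorder}. F r :: 'a::complete_lattice)"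
proof (rule order.antisym)
  show "(SUP t\<in>{..<s}. SUP r\<in>{..<t}. F r) \<le> (SUP r\<in>{..<s}. F r)"
    by (intro SUP_least SUP_upper) auto
  show "(SUP r\<in>{..<s}. F r) \<le> (SUP t\<in>{..<s}. SUP r\<in>{..<t}. F r)"
  proof (rule SUP_least)
    fix r assume "r \<in> {..<s}"
    then obtain t where "r < t" "t < s" using dense by auto
    then show "F r \<le> (SUP t\<in>{..<s}. SUP r\<in>{..<t}. F r)"
      by (meson SUP_upper2 lessThan_iff order_refl)
  qed
qed

lemma SUP_greaterThan_greaterThan:
  "(SUP t\<in>{r<..}. SUP s\<in>{t<..}. F s) = (SUP s\<in>{r::'b::dense_linorder<..}. F s :: 'a::complete_lattice)"
proof (rule order.antisym)
  show "(SUP t\<in>{r<..}. SUP s\<in>{t<..}. F s) \<le> (SUP s\<in>{r<..}. F s)"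
    by (intro SUP_least SUP_upper) auto
  show "(SUP s\<in>{r<..}. F s) \<le> (SUP t\<in>{r<..}. SUP s\<in>{t<..}. F s)"
  proof (rule SUP_least)
    fix s assume "s \<in> {r<..}"
    then obtain t where "r < t" "t < s" using dense by auto
    then show "F s \<le> (SUP t\<in>{r<..}. SUP s\<in>{t<..}. F s)"
      by (meson SUP_upper2 greaterThan_iff order_refl)
  qed
qed

lemma SUP_lessThan_uminus:
  "(SUP r\<in>{..< -t}. F (- r)) = (SUP s\<in>{t::'b::linordered_ab_group_add<..}. F s)"
proof -
  have "(SUP r\<in>{..< -t}. F (- r)) = (SUP r\<in>uminus ` {t<..}. F (- r))"
    by (simp only: image_uminus_greaterThan)
  also have "\<dots> = (SUP s\<in>{t<..}. F s)" by (simp add: image_image del: image_uminus_greaterThan)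
  finally show ?thesis .
qed

lemma antimonoI_SUP_greaterThan:
  fixes u :: "'b::linorder \<Rightarrow> 'a::complete_lattice"
  assumes "\<And>r. (SUP s\<in>{r<..}. u s) \<le> u r"
  shows "antimono u"
proof
  fix r t :: 'b assume "r \<le> t"
  then show "u t \<le> u r"
    by (metis assms order.order_iff_strict SUP_upper greaterThan_iff order_trans)
qed

lemma monoI_SUP_lessThan:
  fixes l :: "'b::linorder \<Rightarrow> 'a::complete_lattice"
  assumes "\<And>s. (SUP r\<in>{..<s}. l r) \<le> l s"
  shows "mono l"
proof
  fix t s :: 'b assume "t \<le> s"
  then show "l t \<le> l s"
    by (metis assms order.order_iff_strict SUP_upper lessThan_iff order_trans)
qed

section \<open>Extended continuous real functions on L and on B(L)\<close>

lemma ext_le_refl: "ext_le f f"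
  by (simp add: ext_le_def)

lemma ext_le_trans: "ext_le f g \<Longrightarrow> ext_le g h \<Longrightarrow> ext_le f h"
  unfolding ext_le_def by (meson order_trans)

lemma ext_le_antisym: "ext_le f g \<Longrightarrow> ext_le g f \<Longrightarrow> f = g"
  unfolding ext_le_def by (simp add: prod_eq_iff fun_eq_iff antisym)

definition ext_neg :: "(rat \<Rightarrow> 'a) \<times> (rat \<Rightarrow> 'a) \<Rightarrow> (rat \<Rightarrow> 'a) \<times> (rat \<Rightarrow> 'a)" where
  "ext_neg f = (\<lambda>r. snd f (- r), \<lambda>s. fst f (- s))"

lemma ext_neg_ext_neg [simp]: "ext_neg (ext_neg f) = f"
  by (simp add: ext_neg_def)

lemma ext_le_ext_neg_iff: "ext_le (ext_neg g) (ext_neg f) \<longleftrightarrow> ext_le f g"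
  unfolding ext_le_def ext_neg_def by (metis fst_conv snd_conv minus_minus)

lemma ext_neg_mem:
  assumes "f \<in> ext_C (A::'a::order set)"
  shows "ext_neg f \<in> ext_C A"
proof -
  obtain u l where f: "f = (u, l)" by (cases f)
  have neg_image: "(\<lambda>s. h (- s)) ` {s. r < s} = h ` {t. t < - r}"
    "(\<lambda>s. h (- s)) ` {s. s < r} = h ` {t. - r < t}" for h :: "rat \<Rightarrow> 'a" and r
    by (metis image_image image_uminus_greaterThan greaterThan_def lessThan_def,
        metis image_image image_uminus_lessThan greaterThan_def lessThan_def)
  have uA: "u r \<in> A" and lA: "l r \<in> A"
    and disj: "s \<le> r \<Longrightarrow> meet_in A {u r, l s} = join_in A {}"
    and u_eq: "u r = join_in A (u ` {s. r < s})"
    and l_eq: "l s = join_in A (l ` {r. r < s})"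
    and cover: "r < s \<Longrightarrow> join_in A {u r, l s} = meet_in A {}" for r s
    using assms unfolding f ext_C_def by blast+
  show ?thesis
    unfolding f ext_neg_def ext_C_def mem_Collect_eq prod.case fst_conv snd_conv neg_image
    using uA lA disj cover by (auto simp: insert_commute simp flip: u_eq l_eq)
qed

lemma ext_C_UNIV_iff: "(u, l) \<in> ext_C (UNIV::'a::frame set) \<longleftrightarrow>
    (\<forall>r s. s \<le> r \<longrightarrow> inf (u r) (l s) = bot) \<and>
    (\<forall>r. u r = (SUP s\<in>{r<..}. u s)) \<and>
    (\<forall>s. l s = (SUP r\<in>{..<s}. l r)) \<and>
    (\<forall>r s. r < s \<longrightarrow> sup (u r) (l s) = top)"
  by (simp add: ext_C_def join_in_UNIV meet_in_UNIV greaterThan_def lessThan_def)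

lemma ext_C_booleanization_iff: "(u, l) \<in> ext_C (booleanization::'a::frame set) \<longleftrightarrow>
    (\<forall>r. u r \<in> booleanization) \<and> (\<forall>s. l s \<in> booleanization) \<and>
    (\<forall>r s. s \<le> r \<longrightarrow> inf (u r) (l s) = bot) \<and>
    (\<forall>r. u r = pc (pc (SUP s\<in>{r<..}. u s))) \<and>
    (\<forall>s. l s = pc (pc (SUP r\<in>{..<s}. l r))) \<and>
    (\<forall>r s. r < s \<longrightarrow> pc (pc (sup (u r) (l s))) = top)"
proof (cases "(\<forall>r. u r \<in> booleanization) \<and> (\<forall>s. l s \<in> booleanization)")
  case True
  then have "meet_in booleanization {u r, l s} = inf (u r) (l s)" for r s
    by (simp add: meet_in_booleanization)
  then show ?thesis
    by (simp add: ext_C_def join_in_booleanization meet_in_booleanization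
        greaterThan_def lessThan_def)
qed (auto simp: ext_C_def)

lemma ext_C_booleanization_fstD:
  assumes "f \<in> ext_C (booleanization::'a::frame set)"
  shows "fst f r \<in> booleanization" and "fst f r = pc (pc (SUP s\<in>{r<..}. fst f s))"
  using assms unfolding ext_C_booleanization_iff[of "fst f" "snd f", unfolded prod.collapse]
  by blast+

definition lower_of :: "(rat \<Rightarrow> 'a::frame) \<Rightarrow> rat \<Rightarrow> 'a" where
  "lower_of u s = (SUP r\<in>{..<s}. pc (u r))"

lemma lower_of_antimono: "(\<And>r. u r \<le> v r) \<Longrightarrow> lower_of v s \<le> lower_of u s"
  unfolding lower_of_def by (intro SUP_mono') (simp add: pc_antimono)

lemma lower_of_left_continuous: "lower_of u s = (SUP r\<in>{..<s}. lower_of u r)"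
  unfolding lower_of_def by (simp add: SUP_lessThan_lessThan)

lemma inf_lower_of_eq_bot:
  assumes "antimono u" "s \<le> r"
  shows "inf (u r) (lower_of u s) = bot"
proof -
  have "inf (u r) (pc (u t)) = bot" if "t < s" for t
  proof -
    have "inf (u r) (pc (u t)) \<le> inf (u t) (pc (u t))"
      using that assms(2) by (intro inf_mono antimonoD[OF assms(1)]) auto
    then show ?thesis by (simp add: inf_pc bot_unique)
  qed
  then show ?thesis by (simp add: lower_of_def frame_inf_SUP)
qed

lemma ext_C_UNIV_lower_eq:
  assumes "(u, l) \<in> ext_C (UNIV::'a::frame set)"
  shows "l = lower_of u"
proof
  fix s
  have disj: "inf (u r) (l r) = bot"
    and l_eq: "l t = (SUP r\<in>{..<t}. l r)"
    and cover: "r < t \<Longrightarrow> sup (u r) (l t) = top" for r t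
    using assms unfolding ext_C_UNIV_iff by blast+
  have "mono l" by (rule monoI_SUP_lessThan) (simp add: l_eq[symmetric])
  have "l r \<le> pc (u r)" for r
    using disj[of r] by (simp add: le_pc_iff inf.commute)
  then have "l s \<le> lower_of u s"
    unfolding lower_of_def by (subst l_eq) (rule SUP_mono')
  moreover have "pc (u r) \<le> l s" if "r < s" for r
  proof -
    obtain t where "r < t" "t < s" using \<open>r < s\<close> dense by blast
    then have "pc (u r) \<le> l t" using cover by (simp add: pc_le_if_sup_eq_top)
    also have "\<dots> \<le> l s" using \<open>t < s\<close> \<open>mono l\<close> by (simp add: monoD)
    finally show ?thesis .
  qed
  then have "lower_of u s \<le> l s" unfolding lower_of_def by (auto intro: SUP_least)
  ultimately show "l s = lower_of u s" by simp
qed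

lemma ext_C_UNIV_upper_eq:
  assumes "(u, l) \<in> ext_C (UNIV::'a::frame set)"
  shows "u r = (SUP s\<in>{r<..}. pc (l s))"
proof -
  have "(\<lambda>r. l (- r), \<lambda>s. u (- s)) \<in> ext_C (UNIV::'a set)"
    using ext_neg_mem[OF assms] by (simp add: ext_neg_def)
  then have "(\<lambda>s. u (- s)) = lower_of (\<lambda>r. l (- r))"
    by (rule ext_C_UNIV_lower_eq)
  from fun_cong[OF this, of "- r"] show ?thesis
    by (simp add: lower_of_def SUP_lessThan_uminus[where F = "\<lambda>s. pc (l s)"])
qed

lemma ext_C_UNIV_intro:
  assumes u_eq: "\<And>r. u r = (SUP s\<in>{r<..}. u s)"
    and cover: "\<And>r s. r < s \<Longrightarrow> sup (u r) (lower_of u s) = top"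
  shows "(u, lower_of u) \<in> ext_C (UNIV::'a::frame set)"
proof -
  have "antimono u" by (rule antimonoI_SUP_greaterThan) (simp flip: u_eq)
  then show ?thesis
    unfolding ext_C_UNIV_iff
    using u_eq cover inf_lower_of_eq_bot lower_of_left_continuous by blast
qed

lemma ext_le_UNIV_iff:
  assumes "f \<in> ext_C (UNIV::'a::frame set)" "g \<in> ext_C (UNIV::'a set)"
  shows "ext_le f g \<longleftrightarrow> (\<forall>r. fst f r \<le> fst g r)"
  using assms ext_C_UNIV_lower_eq[of "fst f" "snd f"] ext_C_UNIV_lower_eq[of "fst g" "snd g"]
  by (auto simp: ext_le_def intro: lower_of_antimono)

lemma ext_C_booleanization_lower_eq:
  assumes "(u, l) \<in> ext_C (booleanization::'a::frame set)"
  shows "l = (\<lambda>s. pc (pc (lower_of u s)))"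
proof
  fix s
  have lB: "l t \<in> booleanization"
    and disj: "inf (u r) (l r) = bot"
    and l_eq: "l t = pc (pc (SUP r\<in>{..<t}. l r))"
    and cover: "r < t \<Longrightarrow> pc (pc (sup (u r) (l t))) = top" for r t
    using assms unfolding ext_C_booleanization_iff by blast+
  have "mono l"
    by (rule monoI_SUP_lessThan) (metis l_eq le_pc_pc)
  have "l r \<le> pc (u r)" for r
    using disj[of r] by (simp add: le_pc_iff inf.commute)
  then have "(SUP r\<in>{..<s}. l r) \<le> lower_of u s"
    unfolding lower_of_def by (rule SUP_mono')
  then have "l s \<le> pc (pc (lower_of u s))"
    by (subst l_eq) (rule pc_pc_mono)
  moreover have "pc (u r) \<le> l s" if "r < s" for r
  proof -
    obtain t where "r < t" "t < s" using \<open>r < s\<close> dense by blast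
    then have "pc (u r) \<le> pc (pc (l t))"
      using cover by (simp add: pc_le_pc_pc_if_pc_pc_sup_eq_top)
    also have "\<dots> = l t" using lB by (simp add: pc_pc_booleanization)
    also have "\<dots> \<le> l s" using \<open>t < s\<close> \<open>mono l\<close> by (simp add: monoD)
    finally show ?thesis .
  qed
  then have "lower_of u s \<le> l s" unfolding lower_of_def by (auto intro: SUP_least)
  then have "pc (pc (lower_of u s)) \<le> l s"
    using pc_pc_mono lB pc_pc_booleanization by metis
  ultimately show "l s = pc (pc (lower_of u s))" by simp
qed

lemma ext_C_booleanization_intro:
  assumes uB: "\<And>r. u r \<in> booleanization"
    and u_eq: "\<And>r. u r = pc (pc (SUP s\<in>{r<..}. u s))"
  shows "(u, \<lambda>s. pc (pc (lower_of u s))) \<in> ext_C (booleanization::'a::frame set)"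
  unfolding ext_C_booleanization_iff
proof (intro conjI allI impI)
  fix r s :: rat
  have "antimono u" by (rule antimonoI_SUP_greaterThan) (metis u_eq le_pc_pc)
  show "s \<le> r \<Longrightarrow> inf (u r) (pc (pc (lower_of u s))) = bot"
    using pc_pc_inf[of "u r" "lower_of u s"] inf_lower_of_eq_bot[OF \<open>antimono u\<close>]
    by (simp add: pc_pc_booleanization[OF uB])
  show "pc (pc (lower_of u s)) = pc (pc (SUP r\<in>{..<s}. pc (pc (lower_of u r))))"
    by (simp add: pc_pc_SUP_pc_pc flip: lower_of_left_continuous)
  assume "r < s"
  then have "pc (u r) \<le> pc (pc (lower_of u s))"
    unfolding lower_of_def by (meson SUP_upper lessThan_iff le_pc_pc order_trans)
  then have "pc (pc (sup (u r) (pc (u r)))) \<le> pc (pc (sup (u r) (pc (pc (lower_of u s)))))"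
    by (intro pc_pc_mono sup_mono order_refl)
  then show "pc (pc (sup (u r) (pc (pc (lower_of u s))))) = top"
    by (simp add: pc_pc_sup_pc top_unique)
qed (rule uB u_eq pc_pc_in_booleanization)+

lemma ext_le_booleanization_iff:
  assumes "f \<in> ext_C (booleanization::'a::frame set)" "g \<in> ext_C (booleanization::'a set)"
  shows "ext_le f g \<longleftrightarrow> (\<forall>r. fst f r \<le> fst g r)"
  using assms ext_C_booleanization_lower_eq[of "fst f" "snd f"]
    ext_C_booleanization_lower_eq[of "fst g" "snd g"]
  by (auto simp: ext_le_def intro: pc_pc_mono lower_of_antimono)

lemma antimono_fst_ext_C_booleanization:
  "f \<in> ext_C (booleanization::'a::frame set) \<Longrightarrow> antimono (fst f)"
  by (rule antimonoI_SUP_greaterThan) (metis ext_C_booleanization_fstD(2) le_pc_pc)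

section \<open>The embedding of C(L) into C(B(L))\<close>

definition booleanize :: "(rat \<Rightarrow> 'a::frame) \<times> (rat \<Rightarrow> 'a) \<Rightarrow> (rat \<Rightarrow> 'a) \<times> (rat \<Rightarrow> 'a)" where
  "booleanize f = (\<lambda>r. pc (pc (fst f r)), \<lambda>s. pc (pc (snd f s)))"

lemma booleanize_mem:
  assumes "f \<in> ext_C (UNIV::'a::frame set)"
  shows "booleanize f \<in> ext_C (booleanization::'a set)"
proof -
  obtain u l where f: "f = (u, l)" by (cases f)
  have disj: "s \<le> r \<Longrightarrow> inf (u r) (l s) = bot"
    and u_eq: "u r = (SUP s\<in>{r<..}. u s)"
    and l_eq: "l s = (SUP r\<in>{..<s}. l r)"
    and cover: "r < s \<Longrightarrow> sup (u r) (l s) = top" for r s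
    using assms unfolding f ext_C_UNIV_iff by blast+
  show ?thesis
    unfolding f booleanize_def fst_conv snd_conv ext_C_booleanization_iff
  proof (intro conjI allI impI)
    fix r s :: rat
    show "s \<le> r \<Longrightarrow> inf (pc (pc (u r))) (pc (pc (l s))) = bot"
      using disj by (simp flip: pc_pc_inf)
    show "pc (pc (u r)) = pc (pc (SUP s\<in>{r<..}. pc (pc (u s))))"
      by (simp add: pc_pc_SUP_pc_pc flip: u_eq)
    show "pc (pc (l s)) = pc (pc (SUP r\<in>{..<s}. pc (pc (l r))))"
      by (simp add: pc_pc_SUP_pc_pc flip: l_eq)
    assume "r < s"
    have "pc (pc (sup (u r) (l s))) \<le> pc (pc (sup (pc (pc (u r))) (pc (pc (l s)))))"
      by (intro pc_pc_mono sup_mono le_pc_pc)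
    then show "pc (pc (sup (pc (pc (u r))) (pc (pc (l s))))) = top"
      using cover[OF \<open>r < s\<close>] by (simp add: top_unique)
  qed (rule pc_pc_in_booleanization)+
qed

lemma booleanize_ext_neg: "booleanize (ext_neg f) = ext_neg (booleanize f)"
  by (simp add: booleanize_def ext_neg_def)

lemma ext_le_booleanize_iff:
  assumes f: "f \<in> ext_C (UNIV::'a::frame set)" and g: "g \<in> ext_C (UNIV::'a set)"
  shows "ext_le (booleanize f) (booleanize g) \<longleftrightarrow> ext_le f g"
proof
  assume "ext_le f g"
  then show "ext_le (booleanize f) (booleanize g)"
    by (simp add: ext_le_def booleanize_def pc_pc_mono)
next
  assume "ext_le (booleanize f) (booleanize g)"
  then have "pc (pc (snd g s)) \<le> pc (pc (snd f s))" for s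
    by (simp add: ext_le_def booleanize_def)
  then have "pc (snd f s) \<le> pc (snd g s)" for s
    using pc_antimono by (metis pc_pc_pc)
  then have "fst f r \<le> fst g r" for r
    using ext_C_UNIV_upper_eq[of "fst f" "snd f"] ext_C_UNIV_upper_eq[of "fst g" "snd g"] f g
    by (simp add: SUP_mono')
  then show "ext_le f g" using ext_le_UNIV_iff[OF f g] by blast
qed

lemma ext_C_booleanization_has_lub:
  assumes S: "S \<subseteq> ext_C (booleanization::'a::frame set)"
  shows "\<exists>x. lub_wrt ext_le (ext_C booleanization) S x"
proof -
  define U where "U r = pc (pc (SUP f\<in>S. fst f r))" for r
  have f_eq: "fst f r = pc (pc (SUP s\<in>{r<..}. fst f s))" if "f \<in> S" for f r
    using S that by (blast intro: ext_C_booleanization_fstD)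
  have U_eq: "U r = pc (pc (SUP s\<in>{r<..}. U s))" for r
  proof -
    have "pc (pc (SUP s\<in>{r<..}. U s)) = pc (pc (SUP s\<in>{r<..}. SUP f\<in>S. fst f s))"
      unfolding U_def by (rule pc_pc_SUP_pc_pc)
    also have "\<dots> = pc (pc (SUP f\<in>S. SUP s\<in>{r<..}. fst f s))"
      by (subst SUP_commute) (rule refl)
    also have "\<dots> = pc (pc (SUP f\<in>S. pc (pc (SUP s\<in>{r<..}. fst f s))))"
      by (simp only: pc_pc_SUP_pc_pc)
    also have "(SUP f\<in>S. pc (pc (SUP s\<in>{r<..}. fst f s))) = (SUP f\<in>S. fst f r)"
      by (rule SUP_cong[OF refl]) (rule f_eq[symmetric])
    finally show ?thesis unfolding U_def ..
  qed
  define sup_S where "sup_S = (U, \<lambda>s. pc (pc (lower_of U s)))"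
  have mem: "sup_S \<in> ext_C booleanization"
    unfolding sup_S_def
    by (rule ext_C_booleanization_intro[OF _ U_eq]) (simp add: U_def pc_pc_in_booleanization)
  have "ext_le f sup_S" if "f \<in> S" for f
  proof -
    have "fst f r \<le> U r" for r
      unfolding U_def using \<open>f \<in> S\<close> by (meson SUP_upper le_pc_pc order_trans)
    then show ?thesis
      using ext_le_booleanization_iff[of f sup_S] S that mem by (auto simp: sup_S_def)
  qed
  moreover have "ext_le sup_S y"
    if y: "y \<in> ext_C booleanization" "\<forall>f\<in>S. ext_le f y" for y
  proof -
    have "fst y r \<in> booleanization" for r
      using y(1) by (rule ext_C_booleanization_fstD)
    moreover have "(SUP f\<in>S. fst f r) \<le> fst y r" for r
      using y S by (intro SUP_least) (auto simp: ext_le_def)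
    ultimately have "U r \<le> fst y r" for r
      unfolding U_def by (metis pc_pc_mono pc_pc_booleanization)
    then show ?thesis using ext_le_booleanization_iff[OF mem y(1)] by (simp add: sup_S_def)
  qed
  ultimately show ?thesis using mem unfolding lub_wrt_def by blast
qed

section \<open>Density of the embedding\<close>

lemma glb_wrt_if_lub_wrt_dual:
  assumes lub: "lub_wrt le Q {d \<in> D. le d (\<sigma> q)} (\<sigma> q)"
    and \<sigma>_mem: "\<And>q. q \<in> Q \<Longrightarrow> \<sigma> q \<in> Q" and \<sigma>_\<sigma>: "\<And>q. \<sigma> (\<sigma> q) = q"
    and \<sigma>_le_iff: "\<And>x y. le (\<sigma> y) (\<sigma> x) \<longleftrightarrow> le x y"
    and \<sigma>_D: "\<And>d. d \<in> D \<Longrightarrow> \<sigma> d \<in> D"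
  shows "glb_wrt le Q {d \<in> D. le q d} q"
  unfolding glb_wrt_def
proof (intro conjI ballI impI)
  show "q \<in> Q" using lub \<sigma>_mem[of "\<sigma> q"] by (simp add: lub_wrt_def \<sigma>_\<sigma>)
  show "le q d" if "d \<in> {d \<in> D. le q d}" for d using that by simp
  fix y assume "y \<in> Q" and y_below: "\<forall>d\<in>{d \<in> D. le q d}. le y d"
  have "le d (\<sigma> y)" if "d \<in> D" "le d (\<sigma> q)" for d
    using that y_below \<sigma>_D[of d] \<sigma>_le_iff[of "\<sigma> q" d] \<sigma>_le_iff[of "\<sigma> y" d]
    by (simp add: \<sigma>_\<sigma>)
  then have "le (\<sigma> q) (\<sigma> y)" using lub \<sigma>_mem[OF \<open>y \<in> Q\<close>] by (simp add: lub_wrt_def)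
  then show "le y q" by (simp add: \<sigma>_le_iff)
qed

lemma ext_C_UNIV_of_rather_below:
  fixes w :: "rat \<Rightarrow> 'a::frame"
  assumes rb: "\<And>r t. r < t \<Longrightarrow> rather_below (w t) (w r)"
  defines "v \<equiv> \<lambda>r. SUP t\<in>{r<..}. w t"
  shows "(v, lower_of v) \<in> ext_C UNIV"
proof (rule ext_C_UNIV_intro)
  show "v r = (SUP s\<in>{r<..}. v s)" for r
    unfolding v_def by (simp add: SUP_greaterThan_greaterThan)
  fix r t :: rat assume "r < t"
  then obtain m r' where "r < m" "m < r'" "r' < t" using dense by (metis less_trans)
  have "v r' \<le> w r'"
    unfolding v_def by (rule SUP_least) (simp add: rb rather_below_le)
  moreover note rb[OF \<open>m < r'\<close>]
  moreover have "w m \<le> v r"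
    unfolding v_def using \<open>r < m\<close> by (simp add: SUP_upper)
  ultimately have "rather_below (v r') (v r)" by (rule rather_below_mono)
  moreover have "pc (v r') \<le> lower_of v t"
    unfolding lower_of_def using \<open>r' < t\<close> by (intro SUP_upper) simp
  ultimately show "sup (v r) (lower_of v t) = top"
    unfolding rather_below_def by (metis sup_commute sup_mono order_refl top_unique)
qed

lemma completely_below_ext_C_witness:
  fixes a b :: "'a::frame"
  assumes "completely_below a b" "r < s"
  obtains f where "f \<in> ext_C UNIV" "a \<le> fst f r"
    and "\<And>t. fst f t \<le> b" "\<And>t. s \<le> t \<Longrightarrow> fst f t = bot"
proof -
  obtain c :: "rat \<Rightarrow> 'a" where "c 0 = a" "c 1 = b"
    and c_rb: "\<And>p q. 0 \<le> p \<Longrightarrow> p < q \<Longrightarrow> q \<le> 1 \<Longrightarrow> rather_below (c p) (c q)"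
    using assms(1) unfolding completely_below_def by blast
  \<comment> \<open>h maps the rationals below s decreasingly into ]0, 1[, so c \<circ> h is a scale on them\<close>
  define h where "h t = (s - t) / (1 + (s - t))" for t
  have h_bounds: "0 < h t" "h t < 1" if "t < s" for t
    using that by (simp_all add: h_def divide_simps)
  have h_less: "h t < h r" if "r < t" "t < s" for r t
    using that by (simp add: h_def divide_simps algebra_simps)
  define w where "w t = (if t < s then c (h t) else bot)" for t
  define v where "v r = (SUP t\<in>{r<..}. w t)" for r
  have "rather_below (w t) (w r)" if "r < t" for r t
  proof (cases "t < s")
    case True
    then show ?thesis
      using c_rb[of "h t" "h r"] h_bounds[of t] h_bounds[of r] h_less[OF that True] that
      by (simp add: w_def)
  qed (simp add: w_def rather_below_bot)
  then have "(v, lower_of v) \<in> ext_C UNIV"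
    unfolding v_def by (rule ext_C_UNIV_of_rather_below)
  moreover have "a \<le> v r"
  proof -
    obtain m where "r < m" "m < s" using \<open>r < s\<close> dense by blast
    then have "a \<le> w m"
      using c_rb[of 0 "h m"] h_bounds[OF \<open>m < s\<close>] \<open>c 0 = a\<close>
      by (simp add: w_def rather_below_le)
    also have "\<dots> \<le> v r" using \<open>r < m\<close> by (simp add: v_def SUP_upper)
    finally show ?thesis .
  qed
  moreover have "v t \<le> b" for t
  proof -
    have "w t' \<le> b" for t'
      using c_rb[of "h t'" 1] h_bounds[of t'] \<open>c 1 = b\<close>
      by (auto simp: w_def intro: rather_below_le)
    then show ?thesis unfolding v_def by (rule SUP_least)
  qed
  moreover have "v t = bot" if "s \<le> t" for t
    using that by (simp add: v_def w_def)
  ultimately show ?thesis by (intro that[of "(v, lower_of v)"]) auto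
qed

lemma booleanize_below_witness:
  assumes q: "q \<in> ext_C (booleanization::'a::frame set)"
    and "completely_below a (fst q s)" "r < s"
  obtains f where "f \<in> ext_C UNIV" "a \<le> fst f r" "ext_le (booleanize f) q"
proof -
  obtain f where f: "f \<in> ext_C UNIV" "a \<le> fst f r"
    and f_below: "\<And>t. fst f t \<le> fst q s" and f_bot: "\<And>t. s \<le> t \<Longrightarrow> fst f t = bot"
    using completely_below_ext_C_witness[OF assms(2,3)] by blast
  have "pc (pc (fst f t)) \<le> fst q t" for t
  proof (cases "s \<le> t")
    case False
    then have "fst q s \<le> fst q t"
      using antimonoD[OF antimono_fst_ext_C_booleanization[OF q]] by simp
    then have "pc (pc (fst f t)) \<le> pc (pc (fst q t))"
      using f_below order_trans pc_pc_mono by blast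
    then show ?thesis by (simp add: pc_pc_booleanization ext_C_booleanization_fstD(1)[OF q])
  qed (simp add: f_bot)
  then have "ext_le (booleanize f) q"
    using ext_le_booleanization_iff[OF booleanize_mem[OF f(1)] q] by (simp add: booleanize_def)
  with f show ?thesis by (rule that)
qed

lemma completely_regularD:
  "completely_regular TYPE('a::frame) \<Longrightarrow> (a::'a) = Sup {b. completely_below b a}"
  by (simp add: completely_regular_def)

lemma booleanize_join_dense:
  assumes CR: "completely_regular TYPE('a::frame)"
    and q: "q \<in> ext_C (booleanization::'a set)"
  shows "lub_wrt ext_le (ext_C booleanization)
           {booleanize f | f. f \<in> ext_C UNIV \<and> ext_le (booleanize f) q} q"
  unfolding lub_wrt_def
proof (intro conjI ballI impI)
  show "q \<in> ext_C booleanization" by (rule q)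
  show "ext_le d q"
    if "d \<in> {booleanize f | f. f \<in> ext_C UNIV \<and> ext_le (booleanize f) q}" for d
    using that by blast
  fix y assume y: "y \<in> ext_C booleanization"
    and y_above: "\<forall>d\<in>{booleanize f | f. f \<in> ext_C UNIV \<and> ext_le (booleanize f) q}. ext_le d y"
  have le: "fst q s \<le> fst y r" if "r < s" for r s
  proof -
    have "a \<le> fst y r" if cb: "completely_below a (fst q s)" for a
    proof -
      obtain f where f: "f \<in> ext_C UNIV" "a \<le> fst f r" "ext_le (booleanize f) q"
        using booleanize_below_witness[OF q cb \<open>r < s\<close>] .
      then have "ext_le (booleanize f) y" using y_above by blast
      then have "pc (pc (fst f r)) \<le> fst y r" by (simp add: ext_le_def booleanize_def)
      with f(2) le_pc_pc show ?thesis by (rule order_trans[OF order_trans])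
    qed
    then have "Sup {a. completely_below a (fst q s)} \<le> fst y r" by (auto intro: Sup_least)
    then show ?thesis by (simp flip: completely_regularD[OF CR])
  qed
  have "fst q r \<le> fst y r" for r
  proof -
    have "fst q r = pc (pc (SUP s\<in>{r<..}. fst q s))"
      by (rule ext_C_booleanization_fstD(2)[OF q])
    also have "\<dots> \<le> pc (pc (fst y r))" by (intro pc_pc_mono SUP_least) (simp add: le)
    also have "\<dots> = fst y r"
      by (rule pc_pc_booleanization[OF ext_C_booleanization_fstD(1)[OF y]])
    finally show ?thesis .
  qed
  then show "ext_le q y" using ext_le_booleanization_iff[OF q y] by blast
qed

lemma booleanize_meet_dense:
  assumes CR: "completely_regular TYPE('a::frame)"
    and q: "q \<in> ext_C (booleanization::'a set)"
  shows "glb_wrt ext_le (ext_C booleanization)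
           {booleanize f | f. f \<in> ext_C UNIV \<and> ext_le q (booleanize f)} q"
proof -
  let ?D = "booleanize ` ext_C (UNIV::'a set)"
  have D_eq: "{booleanize f | f. f \<in> ext_C UNIV \<and> P (booleanize f)} = {d \<in> ?D. P d}" for P
    by blast
  have "lub_wrt ext_le (ext_C booleanization) {d \<in> ?D. ext_le d (ext_neg q)} (ext_neg q)"
    using booleanize_join_dense[OF CR ext_neg_mem[OF q]]
    unfolding D_eq[of "\<lambda>d. ext_le d (ext_neg q)"] .
  then have "glb_wrt ext_le (ext_C booleanization) {d \<in> ?D. ext_le q d} q"
    by (rule glb_wrt_if_lub_wrt_dual[where \<sigma> = ext_neg])
      (auto simp: ext_neg_mem ext_le_ext_neg_iff simp flip: booleanize_ext_neg)
  then show ?thesis unfolding D_eq[of "ext_le q"] .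
qed

theorem corollary3p10:
  assumes "completely_regular TYPE('a::frame)"
  shows "\<exists>e. is_DM_completion ext_le (ext_C (UNIV :: 'a set))
                               ext_le (ext_C (booleanization :: 'a set)) e"
proof
  show "is_DM_completion ext_le (ext_C UNIV) ext_le (ext_C (booleanization :: 'a set)) booleanize"
    unfolding is_DM_completion_def
  proof (intro conjI ballI allI impI)
    fix f g h :: "(rat \<Rightarrow> 'a) \<times> (rat \<Rightarrow> 'a)"
    show "ext_le f f" by (rule ext_le_refl)
    show "ext_le f g \<Longrightarrow> ext_le g h \<Longrightarrow> ext_le f h" by (rule ext_le_trans)
    show "ext_le f g \<Longrightarrow> ext_le g f \<Longrightarrow> f = g" by (rule ext_le_antisym)
    show "f \<in> ext_C UNIV \<Longrightarrow> g \<in> ext_C UNIV \<Longrightarrow>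
        ext_le (booleanize f) (booleanize g) \<longleftrightarrow> ext_le f g"
      by (rule ext_le_booleanize_iff)
  next
    fix S assume "S \<subseteq> ext_C booleanization"
    then show "\<exists>x. lub_wrt ext_le (ext_C booleanization) S x"
      by (rule ext_C_booleanization_has_lub)
  next
    show "booleanize ` ext_C UNIV \<subseteq> ext_C booleanization"
      using booleanize_mem by blast
  next
    fix q :: "(rat \<Rightarrow> 'a) \<times> (rat \<Rightarrow> 'a)"
    assume q: "q \<in> ext_C booleanization"
    show "lub_wrt ext_le (ext_C booleanization)
        {booleanize f | f. f \<in> ext_C UNIV \<and> ext_le (booleanize f) q} q"
      using assms q by (rule booleanize_join_dense)
    show "glb_wrt ext_le (ext_C booleanization)
        {booleanize f | f. f \<in> ext_C UNIV \<and> ext_le q (booleanize f)} q"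
      using assms q by (rule booleanize_meet_dense)
  qed
qed

end
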